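(* Let $\Gamma$ be a $\mathbb Z^d$-periodic graph whose fundamental graph $\Gamma_*=(V_*,\mathcal E_* )$ is bipartite with parts $V_1,V_2$ (every edge of $\Gamma_*$ joins a vertex of $V_1$ to a vertex of $V_2$), and suppose $m=\#V_1-\#V_2>0$. Then $\{1\}$ is a degenerate spectral band of the normalized Laplacian $\Delta$ on $\Gamma$, of multiplicity at least $m$ (i.e. for every $\vartheta\in\mathbb T^d$, $1$ is an eigenvalue of $\Delta(\vartheta)$ of multiplicity at least $m$).
   Context: A $\mathbb Z^d$-periodic graph is a connected infinite graph $\Gamma=(V,\mathcal E)$, possibly with loops and multiple edges, on which $\mathbb Z^d$ acts freely by graph automorphisms, with finite vertex degrees and finite quotient graph $\Gamma_*=\Gamma/\mathbb Z^d=(V_*,\mathcal E_* )$. Each undirected edge is regarded as two oppositely oriented edges; $\mathcal A$ is the set of oriented edges, $\mathcal A_*=\mathcal A/\mathbb Z^d$; $\varkappa_v$ is the number of oriented edges starting at $v$. $(\Delta f)(v)=f(v)-\sum_{(v,u)\in\mathcal A}\frac{f(u)}{\sqrt{\varkappa_v\varkappa_u}}$ on $\ell^2(V)$. Fix a subtree of $\Gamma$ whose vertex set $V_0$ consists of $\#V_*$ pairwise non-equivalent vertices; write $v=v_0+[v]$ with $v_0\in V_0$, $[v]\in\mathbb Z^d$; edge index $\tau(u,v)=[v]-[u]$, defined on $\mathcal A_*$. For $\vartheta\in\mathbb T^d=\mathbb R^d/(2\pi\mathbb Z)^d$, $(\Delta(\vartheta)f)(v)=f(v)-\sum_{\mathbf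 e=(v,u)\in\mathcal A_*}\frac{e^{i\langle\tau(\mathbf e),\vartheta\rangle}}{\sqrt{\varkappa_v\varkappa_u}}f(u)$ on $\ell^2(V_* )$; $\Delta$ is unitarily equivalent to the direct integral of $\Delta(\vartheta)$ over $\mathbb T^d$. A degenerate band $\{\lambda_*\}$ of $\Delta$ means $\lambda_*$ is an eigenvalue of $\Delta$ of infinite multiplicity (equivalently an eigenvalue of $\Delta(\vartheta)$ for all $\vartheta$); its multiplicity is the multiplicity of $\lambda_*$ as an eigenvalue of $\Delta(\vartheta)$ for almost every $\vartheta$. *)

theory Defs
  imports "HOL-Analysis.Analysis" "Jordan_Normal_Form.Matrix_Kernel" "Jordan_Normal_Form.Char_Poly"
begin

text \<open>Fundamental graph data: vertices V_* = {0..<n}; oriented edges E (finite set);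
  src/tgt; rv is the orientation reversal; tau e :: 'd => int is the edge index in Z^d.\<close>

definition periodic_data ::
  "nat \<Rightarrow> 'e set \<Rightarrow> ('e \<Rightarrow> nat) \<Rightarrow> ('e \<Rightarrow> nat) \<Rightarrow> ('e \<Rightarrow> 'e) \<Rightarrow> ('e \<Rightarrow> ('d::finite) \<Rightarrow> int) \<Rightarrow> bool" where
  "periodic_data n E src tgt rv tau \<longleftrightarrow>
     finite E \<and>
     (\<forall>e\<in>E. src e < n \<and> tgt e < n \<and> rv e \<in> E \<and> rv e \<noteq> e \<and> rv (rv e) = e \<and>
             src (rv e) = tgt e \<and> tgt (rv e) = src e \<and> tau (rv e) = - tau e)"

definition periodic_adj ::
  "'e set \<Rightarrow> ('e \<Rightarrow> nat) \<Rightarrow> ('e \<Rightarrow> nat) \<Rightarrow> ('e \<Rightarrow> 'd \<Rightarrow> int) \<Rightarrow> ((nat \<times> ('d \<Rightarrow> int)) \<times> (nat \<times> ('d \<Rightarrow> int))) set" where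
  "periodic_adj E src tgt tau =
     {((v,k),(u,l)). \<exists>e\<in>E. src e = v \<and> tgt e = u \<and> l = (\<lambda>i. k i + tau e i)}"

definition periodic_connected ::
  "nat \<Rightarrow> 'e set \<Rightarrow> ('e \<Rightarrow> nat) \<Rightarrow> ('e \<Rightarrow> nat) \<Rightarrow> ('e \<Rightarrow> 'd \<Rightarrow> int) \<Rightarrow> bool" where
  "periodic_connected n E src tgt tau \<longleftrightarrow>
     (\<forall>v k u l. v < n \<longrightarrow> u < n \<longrightarrow> ((v,k),(u,l)) \<in> (periodic_adj E src tgt tau)\<^sup>*)"

definition kappa :: "'e set \<Rightarrow> ('e \<Rightarrow> nat) \<Rightarrow> nat \<Rightarrow> nat" where
  "kappa E src v = card {e\<in>E. src e = v}"

definition Delta_theta ::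
  "nat \<Rightarrow> 'e set \<Rightarrow> ('e \<Rightarrow> nat) \<Rightarrow> ('e \<Rightarrow> nat) \<Rightarrow> ('e \<Rightarrow> ('d::finite) \<Rightarrow> int) \<Rightarrow> ('d \<Rightarrow> real) \<Rightarrow> complex mat" where
  "Delta_theta n E src tgt tau \<theta> =
     mat n n (\<lambda>(v,u). (if v = u then 1 else 0) -
        (\<Sum>e\<in>{e\<in>E. src e = v \<and> tgt e = u}.
            cis (\<Sum>i\<in>UNIV. real_of_int (tau e i) * \<theta> i)
            / complex_of_real (sqrt (real (kappa E src v) * real (kappa E src u)))))"

end

theory Submission imports Defs "Jordan_Normal_Form.DL_Rank" begin

text \<open>On a bipartite fundamental graph, \<open>\<Delta>(\<vartheta>) - 1\<close> has no entries
  inside a part, so its rows indexed by \<open>V\<^sub>1\<close> only see the coordinates in \<open>V\<^sub>2\<close>.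
  Hence every vector vanishing on \<open>V\<^sub>2\<close> whose image vanishes on \<open>V\<^sub>2\<close> lies in the
  kernel; these are \<open>2 #V\<^sub>2\<close> linear conditions on \<open>#V\<^sub>1 + #V\<^sub>2\<close> unknowns, so the
  eigenspace of \<open>1\<close> has dimension at least \<open>#V\<^sub>1 - #V\<^sub>2\<close>, for every \<open>\<vartheta>\<close>.\<close>

lemma kernel_dim_mono:
  fixes A B :: "'a::field mat"
  assumes A: "A \<in> carrier_mat nr n" and B: "B \<in> carrier_mat nr' n"
    and sub: "mat_kernel A \<subseteq> mat_kernel B"
  shows "kernel_dim A \<le> kernel_dim B"
proof -
  interpret KA: kernel nr n A by (unfold_locales, rule A)
  interpret KB: kernel nr' n B by (unfold_locales, rule B)
  have "KA.Ker.fin_dim"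
    using kernel_basis_exists[OF A] unfolding KA.Ker.fin_dim_def KA.Ker.basis_def by auto
  moreover have "KB.Ker.fin_dim"
    using kernel_basis_exists[OF B] unfolding KB.Ker.fin_dim_def KB.Ker.basis_def by auto
  moreover have "subspace class_ring (mat_kernel A) KB.VK"
  proof (intro subspace.intro submodule.intro)
    show "vectorspace class_ring KB.VK" by (rule KB.Ker.vectorspace_axioms)
    show "module class_ring KB.VK" by (rule KB.Ker.module_axioms)
    show "mat_kernel A \<subseteq> carrier KB.VK" using sub by simp
    show "\<zero>\<^bsub>KB.VK\<^esub> \<in> mat_kernel A" using KA.Ker.zero_closed by simp
  next
    fix v w assume "v \<in> mat_kernel A" "w \<in> mat_kernel A"
    then show "v \<oplus>\<^bsub>KB.VK\<^esub> w \<in> mat_kernel A" using KA.Ker.a_closed by simp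
  next
    fix c :: 'a and v assume "c \<in> carrier class_ring" "v \<in> mat_kernel A"
    then show "c \<odot>\<^bsub>KB.VK\<^esub> v \<in> mat_kernel A" using KA.Ker.smult_closed by simp
  qed
  ultimately have "vectorspace.dim class_ring (KB.Ker.vs (mat_kernel A)) \<le> KB.dim"
    using KB.Ker.subspace_dim by simp
  then show ?thesis using A B by simp
qed

lemma kernel_dim_ge_cols_minus_rows:
  fixes A :: "'a::field mat"
  assumes A: "A \<in> carrier_mat nr nc"
  shows "nc - nr \<le> kernel_dim A"
proof -
  let ?B = "gauss_jordan_single A"
  from gauss_jordan_single[OF A refl]
  have B: "?B \<in> carrier_mat nr nc" and "row_echelon_form ?B" by auto
  then obtain f where "pivot_fun ?B f nc" unfolding row_echelon_form_def by auto
  then have "length (pivot_positions ?B) = card {i. i < nr \<and> row ?B i \<noteq> 0\<^sub>v nc}"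
    using pivot_positions(4)[OF B] by blast
  also have "\<dots> \<le> card {..<nr}" by (rule card_mono) auto
  finally show ?thesis unfolding kernel_dim_code using A by auto
qed

lemma kernel_dim_pos_imp_nonzero_kernel_vec:
  fixes A :: "'a::field mat"
  assumes A: "A \<in> carrier_mat nr n" and pos: "0 < kernel_dim A"
  obtains v where "v \<in> mat_kernel A" "v \<noteq> 0\<^sub>v n"
proof (rule ccontr)
  assume "\<not> thesis"
  with that have "mat_kernel A \<subseteq> {0\<^sub>v n}" by blast
  then have "mat_kernel A \<subseteq> mat_kernel (1\<^sub>m n :: 'a mat)"
    using mat_kernelI[of "1\<^sub>m n :: 'a mat" n n "0\<^sub>v n"] by auto
  then have "kernel_dim A \<le> kernel_dim (1\<^sub>m n :: 'a mat)"
    by (rule kernel_dim_mono[OF A one_carrier_mat])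
  also have "\<dots> = 0" using kernel_one_mat(1)[of n] unfolding kernel_dim_def by simp
  finally show False using pos by simp
qed

lemma eigenvalue_if_kernel_dim_pos:
  fixes A :: "'a::field mat"
  assumes A: "A \<in> carrier_mat n n" and pos: "0 < kernel_dim (A - e \<cdot>\<^sub>m 1\<^sub>m n)"
  shows "eigenvalue A e"
proof -
  have AE: "A - e \<cdot>\<^sub>m 1\<^sub>m n \<in> carrier_mat n n" by (rule minus_carrier_mat) simp
  have char: "char_matrix A e = A - e \<cdot>\<^sub>m 1\<^sub>m n"
    using A unfolding char_matrix_def by (intro eq_matI) auto
  obtain v where v: "v \<in> mat_kernel (A - e \<cdot>\<^sub>m 1\<^sub>m n)" "v \<noteq> 0\<^sub>v n"
    using kernel_dim_pos_imp_nonzero_kernel_vec[OF AE pos] .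
  then have "v \<in> carrier_vec n" "(A - e \<cdot>\<^sub>m 1\<^sub>m n) *\<^sub>v v = 0\<^sub>v n"
    using mat_kernelD[OF AE] by auto
  then show ?thesis unfolding eigenvalue_char_matrix[OF A] char using v(2) by blast
qed

lemma mat_kernel_mat_of_rows_iff:
  assumes "set rs \<subseteq> carrier_vec n" and "x \<in> carrier_vec n"
  shows "x \<in> mat_kernel (mat_of_rows n rs) \<longleftrightarrow> (\<forall>r\<in>set rs. r \<bullet> x = 0)"
proof -
  have "row (mat_of_rows n rs) i = rs ! i" if "i < length rs" for i
    using that assms(1) by (intro mat_of_rows_row) auto
  then have "mat_of_rows n rs *\<^sub>v x = 0\<^sub>v (length rs) \<longleftrightarrow> (\<forall>i<length rs. rs ! i \<bullet> x = 0)"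
    by (auto simp: vec_eq_iff)
  then show ?thesis
    unfolding mat_kernel[OF mat_of_rows_carrier(1)] using assms(2) by (auto simp: all_set_conv_all_nth)
qed

lemma kernel_dim_ge_card_diff_if_zero_block:
  fixes M :: "'a::field mat"
  assumes M: "M \<in> carrier_mat n n" and V: "V1 \<union> V2 = {0..<n}" "V1 \<inter> V2 = {}"
    and zero_block: "\<And>v u. v \<in> V1 \<Longrightarrow> u \<in> V1 \<Longrightarrow> M $$ (v,u) = 0"
  shows "card V1 - card V2 \<le> kernel_dim M"
proof -
  have fin: "finite V1" "finite V2" using V(1) by (metis finite_Un finite_atLeastLessThan)+
  have n: "n = card V1 + card V2" using card_Un_disjoint[OF fin V(2)] V(1) by simp
  define ws where "ws = sorted_list_of_set V2"
  define rs where "rs = map (row M) ws @ map (unit_vec n) ws"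
  have ws: "set ws = V2" "length ws = card V2" using fin(2) by (simp_all add: ws_def)
  have rs: "set rs \<subseteq> carrier_vec n" "length rs = 2 * card V2"
    using M ws by (auto simp: rs_def)
  have N: "mat_of_rows n rs \<in> carrier_mat (2 * card V2) n" using mat_of_rows_carrier(1) rs(2) by metis
  have "mat_kernel (mat_of_rows n rs) \<subseteq> mat_kernel M"
  proof
    fix x assume xN: "x \<in> mat_kernel (mat_of_rows n rs)"
    then have x: "x \<in> carrier_vec n" using mat_kernelD[OF N] by blast
    with xN have orth: "\<forall>r\<in>set rs. r \<bullet> x = 0" using mat_kernel_mat_of_rows_iff[OF rs(1)] by blast
    have vanish_V2: "x $ u = 0" if u: "u \<in> V2" for u
    proof -
      have "unit_vec n u \<bullet> x = 0" using orth u ws(1) by (auto simp: rs_def)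
      moreover have "u < n" using u V(1) by auto
      ultimately show ?thesis using x by simp
    qed
    have "(M *\<^sub>v x) $ v = 0" if v: "v < n" for v
    proof (cases "v \<in> V2")
      case True
      then show ?thesis using orth v M ws(1) by (auto simp: rs_def)
    next
      case False
      with v V(1) have "v \<in> V1" by auto
      have "(M *\<^sub>v x) $ v = (\<Sum>j\<in>{0..<n}. M $$ (v,j) * x $ j)"
        using v M x by (simp add: scalar_prod_def)
      also have "\<dots> = 0"
        using \<open>v \<in> V1\<close> zero_block vanish_V2 V(1) by (intro sum.neutral) auto
      finally show ?thesis .
    qed
    with M x show "x \<in> mat_kernel M" by (intro mat_kernelI[OF M x]) (auto intro: eq_vecI)
  qed
  then have "kernel_dim (mat_of_rows n rs) \<le> kernel_dim M" by (rule kernel_dim_mono[OF N M])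
  moreover have "n - 2 * card V2 \<le> kernel_dim (mat_of_rows n rs)"
    by (rule kernel_dim_ge_cols_minus_rows[OF N])
  ultimately show ?thesis using n by simp
qed

lemma Delta_theta_minus_one_vanishes_on_independent_set:
  assumes "V \<subseteq> {0..<n}" and independent: "\<forall>e\<in>E. \<not> (src e \<in> V \<and> tgt e \<in> V)"
    and "v \<in> V" "u \<in> V"
  shows "(Delta_theta n E src tgt tau \<theta> - 1\<^sub>m n) $$ (v,u) = 0"
proof -
  have no_edge: "{e\<in>E. src e = v \<and> tgt e = u} = {}" using independent assms(3,4) by blast
  have "v < n" "u < n" using assms(1,3,4) by auto
  then show ?thesis by (simp add: Delta_theta_def no_edge)
qed

theorem theorem5p1:
  fixes n :: nat and E :: "'e set" and src tgt :: "'e \<Rightarrow> nat" and rv :: "'e \<Rightarrow> 'e"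
    and tau :: "'e \<Rightarrow> ('d::finite) \<Rightarrow> int" and V1 V2 :: "nat set"
  assumes "periodic_data n E src tgt rv tau"
    and "periodic_connected n E src tgt tau"
    and "V1 \<union> V2 = {0..<n}" and "V1 \<inter> V2 = {}"
    and "\<forall>e\<in>E. (src e \<in> V1 \<and> tgt e \<in> V2) \<or> (src e \<in> V2 \<and> tgt e \<in> V1)"
    and "int (card V1) - int (card V2) > 0"
  shows "\<forall>\<theta> :: 'd \<Rightarrow> real.
           eigenvalue (Delta_theta n E src tgt tau \<theta>) 1 \<and>
           kernel_dim (Delta_theta n E src tgt tau \<theta> - 1\<^sub>m n) \<ge> nat (int (card V1) - int (card V2))"
proof (intro allI conjI)
  fix \<theta> :: "'d \<Rightarrow> real"
  let ?D = "Delta_theta n E src tgt tau \<theta>"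
  have D: "?D \<in> carrier_mat n n" unfolding Delta_theta_def by simp
  have "\<forall>e\<in>E. \<not> (src e \<in> V1 \<and> tgt e \<in> V1)" using assms(4,5) by blast
  then have kd: "card V1 - card V2 \<le> kernel_dim (?D - 1\<^sub>m n)"
    using assms(3)
    by (intro kernel_dim_ge_card_diff_if_zero_block[OF _ assms(3,4)]
        Delta_theta_minus_one_vanishes_on_independent_set) auto
  then show "nat (int (card V1) - int (card V2)) \<le> kernel_dim (?D - 1\<^sub>m n)" by simp
  have "1 \<cdot>\<^sub>m 1\<^sub>m n = (1\<^sub>m n :: complex mat)" by (rule eq_matI) auto
  with kd assms(6) have "0 < kernel_dim (?D - 1 \<cdot>\<^sub>m 1\<^sub>m n)" by simp
  then show "eigenvalue ?D 1" by (rule eigenvalue_if_kernel_dim_pos[OF D])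
qed

end
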